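(* Suppose $\lambda^*/n\to0$ as $n\to\infty$. If $\lambda_j\to\infty$ and $\sqrt{n}\,\lambda_j/\lambda^*\to\infty$ as $n\to\infty$ for all $j=1,\dots,p$, then for every $\beta\in\mathbb{R}^p$, $$P_\beta\big(\hat\beta_{AL,j}\neq0\iff j\in\mathcal{A}\ \text{ for all } j\big)\to1\quad\text{as } n\to\infty.$$
   Context: For each $n\ge p$: linear regression model $y=X\beta+\varepsilon$ with $y\in\mathbb{R}^n$, non-stochastic $X\in\mathbb{R}^{n\times p}$ ($p$ fixed) of full column rank, unknown $\beta\in\mathbb{R}^p$, and $\varepsilon$ with i.i.d. components of mean zero and finite variance $\sigma^2>0$; $P_\beta$ is the probability when the true parameter is $\beta$. $X'X/n\to C$ positive definite as $n\to\infty$. $\hat\beta_{LS}=(X'X)^{-1}X'y$; the events $\{\hat\beta_{LS,j}=0\}$ have probability zero and are excluded. Non-negative tuning parameters $\lambda_j=\lambda_{n,j}$, $\lambda^*=\max_j\lambda_j$. Adaptive Lasso: $\hat\beta_{AL}=\arg\min_{b\in\mathbb{R}^p}\big(\|y-Xb\|^2+2\sum_{j=1}^p\lambda_j|b_j|/|\hat\beta_{LS,j}|\big)$. The active set is $\mathcal{A}=\{j:\beta_j\neq0\}$. *)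

theory Defs
  imports "HOL-Probability.Probability"
begin

text \<open>Design: for each sample size n, the rows x_1,...,x_n in R^p are given by
  a function x :: nat => real^'p (row i for i < n). The index type 'p (finite)
  encodes the fixed dimension p = CARD('p).\<close>

definition gram :: "(nat \<Rightarrow> real^'p::finite) \<Rightarrow> nat \<Rightarrow> real^'p^'p" where
  "gram x n = (\<chi> k l. \<Sum>i<n. x i $ k * x i $ l)"

definition full_col_rank :: "(nat \<Rightarrow> real^'p::finite) \<Rightarrow> nat \<Rightarrow> bool" where
  "full_col_rank x n \<longleftrightarrow> (\<forall>b. (\<forall>i<n. x i \<bullet> b = 0) \<longrightarrow> b = 0)"

definition pos_def :: "real^'p^'p \<Rightarrow> bool" where
  "pos_def C \<longleftrightarrow> transpose C = C \<and> (\<forall>v. v \<noteq> 0 \<longrightarrow> v \<bullet> (C *v v) > 0)"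

definition resp :: "(nat \<Rightarrow> real^'p::finite) \<Rightarrow> real^'p \<Rightarrow> (nat \<Rightarrow> real) \<Rightarrow> nat \<Rightarrow> real" where
  "resp x \<beta> e = (\<lambda>i. x i \<bullet> \<beta> + e i)"

definition lsq :: "(nat \<Rightarrow> real^'p::finite) \<Rightarrow> nat \<Rightarrow> (nat \<Rightarrow> real) \<Rightarrow> real^'p" where
  "lsq x n y = matrix_inv (gram x n) *v (\<Sum>i<n. y i *\<^sub>R x i)"

definition al_obj :: "(nat \<Rightarrow> real^'p::finite) \<Rightarrow> nat \<Rightarrow> ('p \<Rightarrow> real) \<Rightarrow> (nat \<Rightarrow> real) \<Rightarrow> real^'p \<Rightarrow> real" where
  "al_obj x n lam y b = (\<Sum>i<n. (y i - x i \<bullet> b)^2)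
      + 2 * (\<Sum>j\<in>UNIV. lam j * \<bar>b $ j\<bar> / \<bar>lsq x n y $ j\<bar>)"

definition adaptive_lasso :: "(nat \<Rightarrow> real^'p::finite) \<Rightarrow> nat \<Rightarrow> ('p \<Rightarrow> real) \<Rightarrow> (nat \<Rightarrow> real) \<Rightarrow> real^'p" where
  "adaptive_lasso x n lam y = (SOME b. \<forall>b'. al_obj x n lam y b \<le> al_obj x n lam y b')"

definition lam_star :: "('p::finite \<Rightarrow> real) \<Rightarrow> real" where
  "lam_star lam = Max (range lam)"

end

theory Submission
  imports Defs "HOL-Real_Asymp.Real_Asymp"
begin

(* With G = X'X and z = X'eps, the adaptive Lasso objective is, up to the constant ||eps||^2, the
   strictly convex function (b - beta)' G (b - beta) - 2 (b - beta)' z + 2 sum_j w_j |b_j| with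
   weights w_j = lambda_j / |LS_j|, and the coercivity constant of G grows like n.  If ||z|| <= M sqrt n,
   then LS is within O(1/sqrt n) of beta, so the active weights are O(lambda_max) and the minimizer is
   within O((sqrt n + lambda_max) / n) of beta, which keeps every active coordinate nonzero; the inactive
   weights are of order lambda_j sqrt n, too heavy for a nonzero inactive coordinate to pay off.
   Chebyshev's inequality makes ||z|| <= M sqrt n an event of probability at least 1 - O(1/M^2).
   The event itself is measurable because a coordinate of the unique minimizer vanishes iff the
   infimum over the corresponding coordinate hyperplane, approached along a countable dense set,
   equals the global one. *)

section \<open>Quadratic objectives with a weighted l1 penalty\<close>

definition weighted_l1_objective ::
    "real^'p::finite^'p \<Rightarrow> real^'p \<Rightarrow> real^'p \<Rightarrow> ('p \<Rightarrow> real) \<Rightarrow> real^'p \<Rightarrow> real" where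
  "weighted_l1_objective G z \<beta> w b =
     (b - \<beta>) \<bullet> (G *v (b - \<beta>)) - 2 * ((b - \<beta>) \<bullet> z) + 2 * (\<Sum>j\<in>UNIV. w j * \<bar>b $ j\<bar>)"

locale weighted_l1_quadratic =
  fixes G :: "real^'p::finite^'p" and z \<beta> :: "real^'p" and w :: "'p \<Rightarrow> real" and c K :: real
  assumes c_pos: "c > 0"
    and coercive: "\<And>v. c * (norm v)\<^sup>2 \<le> v \<bullet> (G *v v)"
    and bounded: "\<And>v. norm (G *v v) \<le> K * norm v"
    and weights_nonneg: "\<And>j. w j \<ge> 0"
begin

abbreviation obj :: "real^'p \<Rightarrow> real" where
  "obj \<equiv> weighted_l1_objective G z \<beta> w"

lemma K_nonneg: "K \<ge> 0"
  using order_trans[OF norm_ge_zero bounded[of "axis undefined 1"]] by (simp add: norm_axis_1)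

lemma abs_quadratic_le: "\<bar>u \<bullet> (G *v v)\<bar> \<le> K * norm u * norm v"
proof -
  have "\<bar>u \<bullet> (G *v v)\<bar> \<le> norm u * norm (G *v v)" by (rule Cauchy_Schwarz_ineq2)
  also have "\<dots> \<le> norm u * (K * norm v)" by (intro mult_left_mono bounded) simp
  finally show ?thesis by (simp add: mult_ac)
qed

lemma obj_continuous: "continuous_on UNIV obj"
  unfolding weighted_l1_objective_def[abs_def]
  by (intro continuous_intros bounded_linear.continuous_on[OF matrix_vector_mul_bounded_linear])

lemma obj_ge: "obj b \<ge> c * (norm (b - \<beta>))\<^sup>2 - 2 * norm (b - \<beta>) * norm z"
proof -
  have "0 \<le> (\<Sum>j\<in>UNIV. w j * \<bar>b $ j\<bar>)" by (intro sum_nonneg mult_nonneg_nonneg weights_nonneg) auto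
  then show ?thesis
    using coercive[of "b - \<beta>"] norm_cauchy_schwarz[of "b - \<beta>" z] unfolding weighted_l1_objective_def by linarith
qed

lemma obj_attains_min_on_closed:
  assumes "closed S" "s \<in> S"
  shows "\<exists>b\<in>S. \<forall>b'\<in>S. obj b \<le> obj b'"
proof -
  define r where "r = max 1 ((2 * norm z + \<bar>obj s\<bar> + 1) / c)"
  have far: "obj b > obj s" if "norm (b - \<beta>) > r" for b
  proof -
    define t where "t = norm (b - \<beta>)"
    have "t \<ge> 1" and large: "2 * norm z + \<bar>obj s\<bar> + 1 \<le> c * t"
      using that c_pos by (auto simp: t_def r_def field_simps)
    then have "\<bar>obj s\<bar> + 1 \<le> c * t - 2 * norm z" by linarith
    also have "\<dots> \<le> t * (c * t - 2 * norm z)"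
      using mult_right_mono[OF \<open>t \<ge> 1\<close>, of "c * t - 2 * norm z"] large by simp
    finally show ?thesis using obj_ge[of b] by (simp add: t_def algebra_simps power2_eq_square)
  qed
  define T where "T = S \<inter> cball \<beta> r"
  have "compact T" unfolding T_def by (intro closed_Int_compact assms compact_cball)
  moreover have sT: "s \<in> T"
    using far[of s] assms by (force simp: T_def dist_norm norm_minus_commute)
  moreover have "continuous_on T obj" using obj_continuous by (rule continuous_on_subset) simp
  ultimately obtain b where "b \<in> T" and b: "\<forall>y\<in>T. obj b \<le> obj y"
    using continuous_attains_inf by blast
  moreover have "obj b \<le> obj b'" if "b' \<in> S" for b'
  proof (cases "b' \<in> T")
    case False
    then have "obj s < obj b'" using far[of b'] that by (auto simp: T_def dist_norm norm_minus_commute)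
    then show ?thesis using b sT by fastforce
  qed (use b in blast)
  ultimately show ?thesis by (auto simp: T_def)
qed

lemma obj_has_minimizer: "\<exists>b. \<forall>b'. obj b \<le> obj b'"
  using obj_attains_min_on_closed[of UNIV 0] by auto

lemma obj_minimizer_unique:
  assumes b1: "\<forall>b'. obj b1 \<le> obj b'" and b2: "\<forall>b'. obj b2 \<le> obj b'"
  shows "b1 = b2"
proof (rule ccontr)
  assume "b1 \<noteq> b2"
  define Q where "Q u = u \<bullet> (G *v u)" for u
  define pen where "pen b = (\<Sum>j\<in>UNIV. w j * \<bar>b $ j\<bar>)" for b
  define m where "m = (1/2) *\<^sub>R (b1 + b2)"
  have obj_Q: "obj b = Q (b - \<beta>) - 2 * ((b - \<beta>) \<bullet> z) + 2 * pen b" for b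
    by (simp add: weighted_l1_objective_def Q_def pen_def)
  have m_\<beta>: "m - \<beta> = (1/2) *\<^sub>R ((b1 - \<beta>) + (b2 - \<beta>))"
    by (simp add: m_def vec_eq_iff field_simps)
  \<comment> \<open>the parallelogram identity does not need symmetry of G\<close>
  have "Q ((1/2) *\<^sub>R (u + v)) = (Q u + Q v) / 2 - Q (u - v) / 4" for u v
    unfolding Q_def
    by (simp add: matrix_vector_mult_scaleR matrix_vector_right_distrib matrix_vector_mult_diff_distrib
        inner_add_left inner_add_right inner_diff_left inner_diff_right field_simps)
  from this[of "b1 - \<beta>" "b2 - \<beta>"]
  have parallelogram: "Q (m - \<beta>) = (Q (b1 - \<beta>) + Q (b2 - \<beta>)) / 2 - Q (b1 - b2) / 4"
    by (simp add: m_\<beta>)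
  have linear: "(m - \<beta>) \<bullet> z = ((b1 - \<beta>) \<bullet> z + (b2 - \<beta>) \<bullet> z) / 2"
    unfolding m_\<beta> by (simp only: inner_scaleR_left inner_add_left)
  have convex: "pen m \<le> (pen b1 + pen b2) / 2"
  proof -
    have "w j * \<bar>m $ j\<bar> \<le> (w j * \<bar>b1 $ j\<bar> + w j * \<bar>b2 $ j\<bar>) / 2" for j
    proof -
      have "\<bar>m $ j\<bar> = \<bar>b1 $ j + b2 $ j\<bar> / 2" by (simp add: m_def)
      then show ?thesis
        using mult_left_mono[OF abs_triangle_ineq[of "b1 $ j" "b2 $ j"] weights_nonneg[of j]]
        by (simp add: algebra_simps)
    qed
    then show ?thesis unfolding pen_def by (simp add: sum_mono sum.distrib[symmetric] sum_divide_distrib)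
  qed
  have "c * (norm (b1 - b2))\<^sup>2 > 0" using c_pos \<open>b1 \<noteq> b2\<close> by simp
  then have "Q (b1 - b2) > 0" using coercive[of "b1 - b2"] unfolding Q_def by linarith
  moreover have "obj b1 \<le> obj m" "obj b1 = obj b2" using b1 b2 by (auto intro: order_antisym)
  ultimately show False
    using parallelogram linear convex obj_Q[of m] obj_Q[of b1] obj_Q[of b2] by argo
qed

lemma obj_minimizer_error:
  assumes min: "\<forall>b'. obj b \<le> obj b'"
  shows "c * norm (b - \<beta>) \<le> 2 * (norm z + (\<Sum>j | \<beta> $ j \<noteq> 0. w j))"
proof -
  define u where "u = b - \<beta>"
  define W where "W = (\<Sum>j | \<beta> $ j \<noteq> 0. w j)"
  have W_nonneg: "W \<ge> 0" unfolding W_def by (intro sum_nonneg weights_nonneg)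
  have "(\<Sum>j\<in>UNIV. w j * \<bar>\<beta> $ j\<bar>) - (\<Sum>j\<in>UNIV. w j * \<bar>b $ j\<bar>)
      \<le> (\<Sum>j\<in>UNIV. if \<beta> $ j \<noteq> 0 then w j * norm u else 0)"
    unfolding sum_subtractf[symmetric]
  proof (rule sum_mono)
    fix j
    have "\<bar>\<beta> $ j\<bar> - \<bar>b $ j\<bar> \<le> norm u"
      using component_le_norm_cart[of u j] by (simp add: u_def)
    then show "w j * \<bar>\<beta> $ j\<bar> - w j * \<bar>b $ j\<bar> \<le> (if \<beta> $ j \<noteq> 0 then w j * norm u else 0)"
      using weights_nonneg[of j] by (auto simp: right_diff_distrib[symmetric] intro: mult_left_mono)
  qed
  also have "\<dots> = W * norm u" by (simp add: W_def sum_distrib_right sum.inter_filter[symmetric])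
  finally have "(\<Sum>j\<in>UNIV. w j * \<bar>\<beta> $ j\<bar>) - (\<Sum>j\<in>UNIV. w j * \<bar>b $ j\<bar>) \<le> W * norm u" .
  moreover have "obj b \<le> obj \<beta>" using min by simp
  ultimately have "c * (norm u)\<^sup>2 \<le> norm u * (2 * (norm z + W))"
    using coercive[of u] norm_cauchy_schwarz[of u z] unfolding weighted_l1_objective_def u_def[symmetric]
    by (simp add: algebra_simps)
  then show ?thesis
    using W_nonneg by (cases "u = 0") (auto simp: u_def W_def power2_eq_square)
qed

lemma quadratic_diff_le:
  assumes "norm d \<le> norm u"
  shows "(u - d) \<bullet> (G *v (u - d)) \<le> u \<bullet> (G *v u) + 3 * K * norm d * norm u"
proof -
  have "(u - d) \<bullet> (G *v (u - d)) = u \<bullet> (G *v u) - d \<bullet> (G *v u) - u \<bullet> (G *v d) + d \<bullet> (G *v d)"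
    by (simp add: matrix_vector_mult_diff_distrib inner_diff_left inner_diff_right)
  moreover have "K * norm d * norm d \<le> K * norm d * norm u"
    using assms K_nonneg by (intro mult_left_mono) auto
  ultimately show ?thesis
    using abs_quadratic_le[of d u] abs_quadratic_le[of u d] abs_quadratic_le[of d d]
    by (simp add: mult_ac abs_le_iff)
qed

lemma obj_minimizer_vanishes_where_heavy:
  assumes min: "\<forall>b'. obj b \<le> obj b'"
    and heavy: "\<And>k. \<beta> $ k = 0 \<Longrightarrow> w k > norm z + 3/2 * K * norm (b - \<beta>)"
    and "\<beta> $ j = 0"
  shows "b $ j = 0"
proof (rule ccontr)
  assume "b $ j \<noteq> 0"
  define u where "u = b - \<beta>"
  \<comment> \<open>zeroing the inactive coordinates of b saves more penalty than it can cost\<close>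
  define d where "d = (\<chi> k. if \<beta> $ k = 0 then u $ k else 0)"
  define R where "R = norm z + 3/2 * K * norm u"
  have d_nth: "d $ k = (if \<beta> $ k = 0 then b $ k else 0)" for k by (simp add: d_def u_def)
  have "norm d \<le> norm u" unfolding d_def by (rule norm_le_componentwise_cart) auto
  have "obj b \<le> obj (b - d)" using min by simp
  moreover have "b - d - \<beta> = u - d" by (simp add: u_def)
  moreover have "(\<Sum>k\<in>UNIV. w k * \<bar>b $ k\<bar>) - (\<Sum>k\<in>UNIV. w k * \<bar>(b - d) $ k\<bar>)
      = (\<Sum>k\<in>UNIV. w k * \<bar>d $ k\<bar>)"
    unfolding sum_subtractf[symmetric] by (rule sum.cong) (auto simp: d_nth)
  ultimately have penalty_le: "(\<Sum>k\<in>UNIV. w k * \<bar>d $ k\<bar>) \<le> norm d * R"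
    using quadratic_diff_le[OF \<open>norm d \<le> norm u\<close>] norm_cauchy_schwarz[of d z]
    unfolding weighted_l1_objective_def R_def u_def[symmetric]
    by (simp add: inner_diff_left algebra_simps)
  have "R \<ge> 0" using K_nonneg by (simp add: R_def)
  then have "norm d * R \<le> (\<Sum>k\<in>UNIV. \<bar>d $ k\<bar>) * R"
    by (intro mult_right_mono norm_le_l1_cart)
  also have "\<dots> = (\<Sum>k\<in>UNIV. R * \<bar>d $ k\<bar>)" by (simp add: sum_distrib_left mult.commute)
  also have "\<dots> < (\<Sum>k\<in>UNIV. w k * \<bar>d $ k\<bar>)"
  proof (rule sum_strict_mono_ex1)
    show "\<forall>k\<in>UNIV. R * \<bar>d $ k\<bar> \<le> w k * \<bar>d $ k\<bar>"
    proof
      fix k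
      show "R * \<bar>d $ k\<bar> \<le> w k * \<bar>d $ k\<bar>"
      proof (cases "\<beta> $ k = 0")
        case True
        then have "R < w k" using heavy by (simp add: R_def u_def)
        then show ?thesis by (intro mult_right_mono) auto
      qed (simp add: d_nth)
    qed
    show "\<exists>k\<in>UNIV. R * \<bar>d $ k\<bar> < w k * \<bar>d $ k\<bar>"
      using heavy[OF \<open>\<beta> $ j = 0\<close>] \<open>b $ j \<noteq> 0\<close> \<open>\<beta> $ j = 0\<close>
      by (intro bexI[of _ j]) (auto simp: d_nth R_def u_def)
  qed simp
  finally show False using penalty_le by simp
qed

lemma obj_minimizer_support:
  assumes min: "\<forall>b'. obj b \<le> obj b'"
    and W: "(\<Sum>j | \<beta> $ j \<noteq> 0. w j) \<le> W"
    and active: "\<And>j. \<beta> $ j \<noteq> 0 \<Longrightarrow> 2 * (norm z + W) / c < \<bar>\<beta> $ j\<bar>"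
    and inactive: "\<And>j. \<beta> $ j = 0 \<Longrightarrow> norm z + 3/2 * K * (2 * (norm z + W) / c) < w j"
  shows "b $ j \<noteq> 0 \<longleftrightarrow> \<beta> $ j \<noteq> 0"
proof -
  have error: "norm (b - \<beta>) \<le> 2 * (norm z + W) / c"
    using obj_minimizer_error[OF min] W c_pos by (simp add: field_simps)
  show ?thesis
  proof (cases "\<beta> $ j = 0")
    case True
    have "norm z + 3/2 * K * norm (b - \<beta>) < w k" if "\<beta> $ k = 0" for k
      using inactive[OF that] mult_left_mono[OF error, of "3/2 * K"] K_nonneg by linarith
    then show ?thesis using obj_minimizer_vanishes_where_heavy[OF min] True by blast
  next
    case False
    then show ?thesis
      using active[OF False] error component_le_norm_cart[of "b - \<beta>" j] by auto
  qed
qed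

end

lemma continuous_on_UNIV_less_nearby:
  fixes f :: "'a::metric_space \<Rightarrow> real"
  assumes "continuous_on UNIV f" and "\<epsilon> > 0"
  obtains \<delta> where "\<delta> > 0" "\<And>y. dist y b < \<delta> \<Longrightarrow> f y < f b + \<epsilon>"
proof -
  obtain \<delta> where "\<delta> > 0" "\<forall>y. dist y b < \<delta> \<longrightarrow> dist (f y) (f b) < \<epsilon>"
    using assms unfolding continuous_on_iff by blast
  then show ?thesis using that by (fastforce simp: dist_real_def abs_less_iff)
qed

lemma dense_projections_approach_minimum:
  fixes f :: "real^'n::finite \<Rightarrow> real" and Dd :: "(real^'n) set"
  assumes cont: "continuous_on UNIV f" and min: "\<forall>y. f b \<le> f y" and "b $ j = 0"
    and dense: "\<And>U. open U \<Longrightarrow> U \<noteq> {} \<Longrightarrow> \<exists>d\<in>Dd. d \<in> U"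
  shows "\<forall>d'\<in>Dd. \<forall>k::nat. \<exists>d\<in>Dd. f (\<chi> i. if i = j then 0 else d $ i) < f d' + 1 / Suc k"
proof (intro ballI allI)
  fix d' and k :: nat
  obtain \<delta> where "\<delta> > 0" and \<delta>: "\<And>y. dist y b < \<delta> \<Longrightarrow> f y < f b + 1 / Suc k"
    using continuous_on_UNIV_less_nearby[OF cont, of "1 / Suc k"] by auto
  obtain d where "d \<in> Dd" "d \<in> ball b \<delta>" using dense[of "ball b \<delta>"] \<open>\<delta> > 0\<close> by auto
  have "norm ((\<chi> i. if i = j then 0 else d $ i) - b) \<le> norm (d - b)"
    using \<open>b $ j = 0\<close> by (intro norm_le_componentwise_cart) auto
  then have "f (\<chi> i. if i = j then 0 else d $ i) < f b + 1 / Suc k"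
    using \<delta> \<open>d \<in> ball b \<delta>\<close> by (simp add: dist_norm norm_minus_commute)
  then show "\<exists>d\<in>Dd. f (\<chi> i. if i = j then 0 else d $ i) < f d' + 1 / Suc k"
    using min \<open>d \<in> Dd\<close> by (meson add_le_cancel_right order_less_le_trans)
qed

lemma unique_minimizer_coord_zero_iff:
  fixes f :: "real^'n::finite \<Rightarrow> real" and Dd :: "(real^'n) set"
  assumes cont: "continuous_on UNIV f"
    and min: "\<forall>y. f b \<le> f y"
    and unique: "\<And>b'. \<forall>y. f b' \<le> f y \<Longrightarrow> b' = b"
    and hyperplane_min: "\<exists>h. h $ j = 0 \<and> (\<forall>y. y $ j = 0 \<longrightarrow> f h \<le> f y)"
    and dense: "\<And>U. open U \<Longrightarrow> U \<noteq> {} \<Longrightarrow> \<exists>d\<in>Dd. d \<in> U"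
  shows "b $ j = 0 \<longleftrightarrow>
    (\<forall>d'\<in>Dd. \<forall>k::nat. \<exists>d\<in>Dd. f (\<chi> i. if i = j then 0 else d $ i) < f d' + 1 / Suc k)"
proof
  show "\<forall>d'\<in>Dd. \<forall>k::nat. \<exists>d\<in>Dd. f (\<chi> i. if i = j then 0 else d $ i) < f d' + 1 / Suc k"
    if "b $ j = 0"
    using dense_projections_approach_minimum[OF cont min that dense] .
  show "b $ j = 0"
    if approx: "\<forall>d'\<in>Dd. \<forall>k::nat. \<exists>d\<in>Dd. f (\<chi> i. if i = j then 0 else d $ i) < f d' + 1 / Suc k"
  proof (rule ccontr)
    assume "b $ j \<noteq> 0"
    obtain h where "h $ j = 0" and h: "\<forall>y. y $ j = 0 \<longrightarrow> f h \<le> f y" using hyperplane_min by blast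
    \<comment> \<open>the minimum over the hyperplane is strictly larger, by uniqueness of the global minimizer\<close>
    have "f h > f b"
    proof (rule ccontr)
      assume "\<not> f h > f b"
      then have "\<forall>y. f h \<le> f y" using min by (meson not_less order_trans)
      then show False using unique \<open>h $ j = 0\<close> \<open>b $ j \<noteq> 0\<close> by blast
    qed
    define \<eta> where "\<eta> = f h - f b"
    obtain \<delta> where "\<delta> > 0" and \<delta>: "\<And>y. dist y b < \<delta> \<Longrightarrow> f y < f b + \<eta> / 2"
      using continuous_on_UNIV_less_nearby[OF cont, of "\<eta> / 2"] \<open>f h > f b\<close> by (auto simp: \<eta>_def)
    obtain d' where "d' \<in> Dd" "d' \<in> ball b \<delta>" using dense[of "ball b \<delta>"] \<open>\<delta> > 0\<close> by auto
    then have "f d' < f b + \<eta> / 2" using \<delta> by (simp add: dist_commute)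
    obtain k :: nat where "1 / Suc k < \<eta> / 2"
      using reals_Archimedean[of "\<eta> / 2"] \<open>f h > f b\<close> by (auto simp: \<eta>_def inverse_eq_divide)
    obtain d where "f (\<chi> i. if i = j then 0 else d $ i) < f d' + 1 / Suc k"
      using approx \<open>d' \<in> Dd\<close> by blast
    moreover have "f h \<le> f (\<chi> i. if i = j then 0 else d $ i)" using h by simp
    ultimately show False
      using \<open>f d' < f b + \<eta> / 2\<close> \<open>1 / Suc k < \<eta> / 2\<close> unfolding \<eta>_def by argo
  qed
qed

section \<open>Coercivity of the Gram matrices\<close>

lemma pos_def_coercive:
  fixes C :: "real^'n::finite^'n"
  assumes "pos_def C"
  obtains c where "c > 0" "\<And>v. c * (norm v)\<^sup>2 \<le> v \<bullet> (C *v v)"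
proof -
  have "compact (sphere (0::real^'n) 1)" by simp
  moreover have "sphere (0::real^'n) 1 \<noteq> {}"
    using norm_axis_1[of undefined] by (auto simp: sphere_def intro!: exI[of _ "axis undefined 1"])
  moreover have "continuous_on (sphere 0 1) (\<lambda>v::real^'n. v \<bullet> (C *v v))"
    by (intro continuous_intros bounded_linear.continuous_on[OF matrix_vector_mul_bounded_linear])
  ultimately obtain v0 where v0: "v0 \<in> sphere 0 1" and min: "\<forall>u\<in>sphere 0 1. v0 \<bullet> (C *v v0) \<le> u \<bullet> (C *v u)"
    using continuous_attains_inf by blast
  have "v0 \<noteq> 0" using v0 by auto
  then have "v0 \<bullet> (C *v v0) > 0" using assms by (simp add: pos_def_def)
  moreover have "v0 \<bullet> (C *v v0) * (norm v)\<^sup>2 \<le> v \<bullet> (C *v v)" for v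
  proof (cases "v = 0")
    case False
    define u where "u = (1 / norm v) *\<^sub>R v"
    have "u \<in> sphere 0 1" using False by (simp add: u_def)
    moreover have "v \<bullet> (C *v v) = (norm v)\<^sup>2 * (u \<bullet> (C *v u))"
      using False by (simp add: u_def matrix_vector_mult_scaleR power2_eq_square)
    ultimately show ?thesis
      using mult_right_mono[of "v0 \<bullet> (C *v v0)" "u \<bullet> (C *v u)" "(norm v)\<^sup>2"] min
      by (simp add: mult.commute)
  qed simp
  ultimately show ?thesis using that by blast
qed

lemma norm_matrix_vector_le_entry_sum:
  fixes A :: "real^'n^'m"
  shows "norm (A *v v) \<le> (\<Sum>i\<in>UNIV. \<Sum>j\<in>UNIV. \<bar>A $ i $ j\<bar>) * norm v"
  using onorm[OF matrix_vector_mul_bounded_linear, of A v] onorm_le_matrix_component_sum[of A]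
  by (meson mult_right_mono norm_ge_zero order_trans)

lemma eventually_coercive_bounded:
  fixes A :: "nat \<Rightarrow> real^'n^'n"
  assumes lim: "A \<longlonglongrightarrow> C" and "c > 0" and coercive: "\<And>v. c * (norm v)\<^sup>2 \<le> v \<bullet> (C *v v)"
  obtains K where "K \<ge> 0"
    "\<forall>\<^sub>F n in sequentially. \<forall>v. c / 2 * (norm v)\<^sup>2 \<le> v \<bullet> (A n *v v) \<and> norm (A n *v v) \<le> K * norm v"
proof
  define S where "S M = (\<Sum>i\<in>UNIV. \<Sum>j\<in>UNIV. \<bar>M $ i $ j\<bar>)" for M :: "real^'n^'n"
  have "(\<lambda>n. S (A n - C)) \<longlonglongrightarrow> S (C - C)"
    unfolding S_def by (intro tendsto_intros lim)
  then have "(\<lambda>n. S (A n - C)) \<longlonglongrightarrow> 0" by (simp add: S_def)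
  from order_tendstoD(2)[OF this, of "c / 2"]
  have small: "\<forall>\<^sub>F n in sequentially. S (A n - C) < c / 2" using \<open>c > 0\<close> by simp
  show "S C + c / 2 \<ge> 0" using \<open>c > 0\<close> by (simp add: S_def sum_nonneg)
  show "\<forall>\<^sub>F n in sequentially. \<forall>v. c / 2 * (norm v)\<^sup>2 \<le> v \<bullet> (A n *v v)
      \<and> norm (A n *v v) \<le> (S C + c / 2) * norm v"
    using small
  proof eventually_elim
    case (elim n)
    have perturbation: "norm ((A n - C) *v v) \<le> c / 2 * norm v" for v
      using norm_matrix_vector_le_entry_sum[of "A n - C" v]
        mult_right_mono[OF less_imp_le[OF elim] norm_ge_zero[of v]]
      unfolding S_def by linarith
    show ?case
    proof (intro allI conjI)
      fix v
      have "\<bar>v \<bullet> ((A n - C) *v v)\<bar> \<le> norm v * (c / 2 * norm v)"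
        using order_trans[OF Cauchy_Schwarz_ineq2 mult_left_mono[OF perturbation norm_ge_zero]] .
      then have "\<bar>v \<bullet> ((A n - C) *v v)\<bar> \<le> c / 2 * (norm v)\<^sup>2"
        by (simp add: power2_eq_square mult_ac)
      moreover have "v \<bullet> (A n *v v) = v \<bullet> (C *v v) + v \<bullet> ((A n - C) *v v)"
        by (simp add: matrix_vector_mult_diff_rdistrib inner_diff_right)
      ultimately show "c / 2 * (norm v)\<^sup>2 \<le> v \<bullet> (A n *v v)"
        using coercive[of v] by linarith
      have "norm (A n *v v) \<le> norm (C *v v) + norm ((A n - C) *v v)"
        by (metis matrix_vector_mult_diff_rdistrib norm_triangle_sub add.commute)
      then show "norm (A n *v v) \<le> (S C + c / 2) * norm v"
        using norm_matrix_vector_le_entry_sum[of C v] perturbation[of v]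
        by (simp add: S_def algebra_simps)
    qed
  qed
qed

section \<open>The adaptive Lasso as a weighted l1 problem\<close>

definition design_noise :: "(nat \<Rightarrow> real^'p::finite) \<Rightarrow> nat \<Rightarrow> (nat \<Rightarrow> real) \<Rightarrow> real^'p" where
  "design_noise x n e = (\<Sum>i<n. e i *\<^sub>R x i)"

definition al_weights :: "(nat \<Rightarrow> real^'p::finite) \<Rightarrow> nat \<Rightarrow> ('p \<Rightarrow> real) \<Rightarrow> (nat \<Rightarrow> real) \<Rightarrow> 'p \<Rightarrow> real" where
  "al_weights x n lam y j = lam j / \<bar>lsq x n y $ j\<bar>"

lemma gram_mult_vector: "gram x n *v v = (\<Sum>i<n. (x i \<bullet> v) *\<^sub>R x i)"
proof -
  have "(gram x n *v v) $ k = (\<Sum>i<n. (x i \<bullet> v) *\<^sub>R x i) $ k" for k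
  proof -
    have "(gram x n *v v) $ k = (\<Sum>l\<in>UNIV. \<Sum>i<n. x i $ k * x i $ l * v $ l)"
      by (simp add: gram_def matrix_vector_mult_def sum_distrib_right)
    also have "\<dots> = (\<Sum>i<n. \<Sum>l\<in>UNIV. x i $ k * x i $ l * v $ l)" by (rule sum.swap)
    also have "\<dots> = (\<Sum>i<n. (x i \<bullet> v) *\<^sub>R x i) $ k"
      by (simp add: inner_vec_def sum_distrib_left sum_distrib_right mult_ac)
    finally show ?thesis .
  qed
  then show ?thesis by (simp add: vec_eq_iff)
qed

lemma inner_gram_mult: "u \<bullet> (gram x n *v v) = (\<Sum>i<n. (x i \<bullet> u) * (x i \<bullet> v))"
  by (simp add: gram_mult_vector inner_sum_right mult_ac inner_commute)

lemma residual_sum_squares: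
  "(\<Sum>i<n. (resp x \<beta> e i - x i \<bullet> b)\<^sup>2) =
     (b - \<beta>) \<bullet> (gram x n *v (b - \<beta>)) - 2 * ((b - \<beta>) \<bullet> design_noise x n e) + (\<Sum>i<n. (e i)\<^sup>2)"
  by (simp add: resp_def inner_gram_mult design_noise_def inner_sum_right inner_diff_right
      power2_eq_square algebra_simps sum.distrib sum_subtractf sum_distrib_left inner_commute)

lemma al_obj_resp:
  "al_obj x n lam (resp x \<beta> e) b =
     weighted_l1_objective (gram x n) (design_noise x n e) \<beta> (al_weights x n lam (resp x \<beta> e)) b
     + (\<Sum>i<n. (e i)\<^sup>2)"
  unfolding al_obj_def weighted_l1_objective_def al_weights_def residual_sum_squares
  by simp

lemma coercive_imp_invertible:
  fixes G :: "real^'n::finite^'n"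
  assumes "c > 0" and "\<And>v. c * (norm v)\<^sup>2 \<le> v \<bullet> (G *v v)"
  shows "invertible G"
proof -
  have "v = 0" if "G *v v = 0" for v
    using assms(2)[of v] \<open>c > 0\<close> that by (auto simp: mult_le_0_iff)
  then show ?thesis using matrix_left_invertible_ker invertible_left_inverse by blast
qed

lemma coercive_solution_norm_le:
  fixes G :: "real^'n::finite^'n"
  assumes "c * (norm v)\<^sup>2 \<le> v \<bullet> (G *v v)" and "G *v v = z"
  shows "c * norm v \<le> norm z"
proof (cases "v = 0")
  case False
  have "v \<bullet> (G *v v) = v \<bullet> z" using assms(2) by simp
  then have "c * (norm v)\<^sup>2 \<le> norm v * norm z"
    using assms(1) Cauchy_Schwarz_ineq2[of v z] by linarith
  then show ?thesis using False by (simp add: power2_eq_square)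
qed simp

lemma gram_mult_lsq_error:
  assumes "invertible (gram x n)"
  shows "gram x n *v (lsq x n (resp x \<beta> e) - \<beta>) = design_noise x n e"
proof -
  have "(\<Sum>i<n. resp x \<beta> e i *\<^sub>R x i) = gram x n *v \<beta> + design_noise x n e"
    by (simp add: resp_def gram_mult_vector design_noise_def scaleR_add_left sum.distrib)
  moreover have "gram x n ** matrix_inv (gram x n) = mat 1"
    using assms unfolding invertible_def matrix_inv_def by (rule someI2_ex) blast
  ultimately show ?thesis
    by (simp add: lsq_def matrix_vector_mul_assoc matrix_vector_mult_diff_distrib)
qed

lemma lsq_error_le:
  assumes "c > 0" and coercive: "\<And>v. c * (norm v)\<^sup>2 \<le> v \<bullet> (gram x n *v v)"
  shows "c * norm (lsq x n (resp x \<beta> e) - \<beta>) \<le> norm (design_noise x n e)"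
  using coercive_solution_norm_le[OF coercive gram_mult_lsq_error[OF coercive_imp_invertible[OF assms]]] .

lemma al_weights_nonneg: "(\<And>j. lam j \<ge> 0) \<Longrightarrow> al_weights x n lam y j \<ge> 0"
  by (simp add: al_weights_def)

lemma adaptive_lasso_minimizes:
  assumes "weighted_l1_quadratic (gram x n) (al_weights x n lam (resp x \<beta> e)) c K"
  shows "\<forall>b'. al_obj x n lam (resp x \<beta> e) (adaptive_lasso x n lam (resp x \<beta> e)) \<le> al_obj x n lam (resp x \<beta> e) b'"
proof -
  have "\<exists>b. \<forall>b'. al_obj x n lam (resp x \<beta> e) b \<le> al_obj x n lam (resp x \<beta> e) b'"
    using weighted_l1_quadratic.obj_has_minimizer[OF assms] by (simp add: al_obj_resp)
  then show ?thesis unfolding adaptive_lasso_def by (rule someI_ex)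
qed

lemma al_weights_bounds:
  fixes lam :: "'p::finite \<Rightarrow> real"
  assumes close: "\<And>j. \<bar>lsq x n y $ j - \<beta> $ j\<bar> \<le> \<delta>"
    and lam_nonneg: "\<And>j. 0 \<le> lam j" and lam_le: "\<And>j. lam j \<le> L"
    and "m > 0" and beta_min: "\<And>j. \<beta> $ j \<noteq> 0 \<Longrightarrow> m \<le> \<bar>\<beta> $ j\<bar>" and "2 * \<delta> \<le> m"
  shows "(\<Sum>j | \<beta> $ j \<noteq> 0. al_weights x n lam y j) \<le> CARD('p) * (2 * L / m)"
    and "\<beta> $ j = 0 \<Longrightarrow> lsq x n y $ j \<noteq> 0 \<Longrightarrow> lam j / \<delta> \<le> al_weights x n lam y j"
proof -
  have active_weight: "al_weights x n lam y j \<le> 2 * L / m" if "\<beta> $ j \<noteq> 0" for j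
  proof -
    have "m / 2 \<le> \<bar>lsq x n y $ j\<bar>" using close[of j] beta_min[OF that] \<open>2 * \<delta> \<le> m\<close> by linarith
    then have "al_weights x n lam y j \<le> lam j / (m / 2)"
      unfolding al_weights_def using lam_nonneg \<open>m > 0\<close> by (intro divide_left_mono) auto
    also have "\<dots> \<le> L / (m / 2)" using lam_le \<open>m > 0\<close> by (intro divide_right_mono) auto
    finally show ?thesis by (simp add: mult.commute)
  qed
  have "L \<ge> 0" using lam_nonneg lam_le by (meson order_trans)
  have "(\<Sum>j | \<beta> $ j \<noteq> 0. al_weights x n lam y j) \<le> card {j. \<beta> $ j \<noteq> 0} * (2 * L / m)"
    using active_weight by (intro sum_bounded_above) auto
  also have "\<dots> \<le> CARD('p) * (2 * L / m)"
    using \<open>L \<ge> 0\<close> \<open>m > 0\<close> by (intro mult_right_mono) (simp_all add: card_mono)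
  finally show "(\<Sum>j | \<beta> $ j \<noteq> 0. al_weights x n lam y j) \<le> CARD('p) * (2 * L / m)" .
  assume "\<beta> $ j = 0" and "lsq x n y $ j \<noteq> 0"
  then have "0 < \<bar>lsq x n y $ j\<bar>" "\<bar>lsq x n y $ j\<bar> \<le> \<delta>" using close[of j] by simp_all
  then show "lam j / \<delta> \<le> al_weights x n lam y j"
    unfolding al_weights_def using lam_nonneg by (intro divide_left_mono mult_pos_pos) auto
qed

lemma adaptive_lasso_support:
  fixes x :: "nat \<Rightarrow> real^'p::finite" and lam :: "'p \<Rightarrow> real"
  assumes "c > 0"
    and coercive: "\<And>v. c * (norm v)\<^sup>2 \<le> v \<bullet> (gram x n *v v)"
    and bounded: "\<And>v. norm (gram x n *v v) \<le> K * norm v"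
    and lam_nonneg: "\<And>j. 0 \<le> lam j" and lam_le: "\<And>j. lam j \<le> L"
    and noise: "norm (design_noise x n e) \<le> \<zeta>"
    and lsq_nonzero: "\<And>j. lsq x n (resp x \<beta> e) $ j \<noteq> 0"
    and "m > 0" and beta_min: "\<And>j. \<beta> $ j \<noteq> 0 \<Longrightarrow> m \<le> \<bar>\<beta> $ j\<bar>"
    and small_error: "2 * \<zeta> / c \<le> m"
    and small_rate: "2 * (\<zeta> + CARD('p) * (2 * L / m)) / c < m"
    and heavy: "\<And>j. \<zeta> + 3/2 * K * (2 * (\<zeta> + CARD('p) * (2 * L / m)) / c) < lam j * c / \<zeta>"
  shows "adaptive_lasso x n lam (resp x \<beta> e) $ j \<noteq> 0 \<longleftrightarrow> \<beta> $ j \<noteq> 0"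
proof -
  define z where "z = design_noise x n e"
  define w where "w = al_weights x n lam (resp x \<beta> e)"
  define W where "W = CARD('p) * (2 * L / m)"
  interpret weighted_l1_quadratic "gram x n" z \<beta> w c K
    using \<open>c > 0\<close> coercive bounded lam_nonneg by unfold_locales (auto simp: w_def al_weights_nonneg)
  have min: "\<forall>b'. obj (adaptive_lasso x n lam (resp x \<beta> e)) \<le> obj b'"
    using adaptive_lasso_minimizes[OF weighted_l1_quadratic_axioms[unfolded w_def]]
    by (simp add: al_obj_resp z_def w_def)
  have "c * norm (lsq x n (resp x \<beta> e) - \<beta>) \<le> \<zeta>"
    using lsq_error_le[OF \<open>c > 0\<close> coercive, of \<beta> e] noise by linarith
  have "\<bar>lsq x n (resp x \<beta> e) $ j - \<beta> $ j\<bar> \<le> \<zeta> / c" for j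
  proof -
    have "\<bar>lsq x n (resp x \<beta> e) $ j - \<beta> $ j\<bar> \<le> norm (lsq x n (resp x \<beta> e) - \<beta>)"
      using component_le_norm_cart[of "lsq x n (resp x \<beta> e) - \<beta>" j] by simp
    from mult_left_mono[OF this less_imp_le[OF \<open>c > 0\<close>]]
    have "c * \<bar>lsq x n (resp x \<beta> e) $ j - \<beta> $ j\<bar> \<le> \<zeta>"
      using \<open>c * norm (lsq x n (resp x \<beta> e) - \<beta>) \<le> \<zeta>\<close> by linarith
    then show ?thesis using \<open>c > 0\<close> by (simp add: le_divide_eq mult.commute)
  qed
  moreover have "2 * (\<zeta> / c) \<le> m" using small_error by simp
  ultimately have active_sum: "(\<Sum>j | \<beta> $ j \<noteq> 0. w j) \<le> W"
    and inactive_weight: "\<And>k. \<beta> $ k = 0 \<Longrightarrow> lam k / (\<zeta> / c) \<le> w k"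
    using al_weights_bounds[where lam = lam and \<delta> = "\<zeta> / c", OF _ lam_nonneg lam_le \<open>m > 0\<close> beta_min]
      lsq_nonzero unfolding w_def W_def by blast+
  have rate_mono: "2 * (norm z + W) / c \<le> 2 * (\<zeta> + W) / c"
    using noise \<open>c > 0\<close> by (simp add: z_def divide_right_mono)
  show ?thesis
  proof (rule obj_minimizer_support[OF min])
    show "(\<Sum>j | \<beta> $ j \<noteq> 0. w j) \<le> W" by (fact active_sum)
    show "2 * (norm z + W) / c < \<bar>\<beta> $ k\<bar>" if "\<beta> $ k \<noteq> 0" for k
      using rate_mono small_rate beta_min[OF that] by (simp add: W_def)
    show "norm z + 3/2 * K * (2 * (norm z + W) / c) < w k" if "\<beta> $ k = 0" for k
      using mult_left_mono[OF rate_mono, of "3/2 * K"] K_nonneg noise heavy[of k] inactive_weight[OF that]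
      by (simp add: W_def z_def)
  qed
qed

lemma adaptive_lasso_coord_zero_iff:
  fixes x :: "nat \<Rightarrow> real^'p::finite"
  assumes quad: "weighted_l1_quadratic (gram x n) (al_weights x n lam (resp x \<beta> e)) c K"
    and dense: "\<And>U. open U \<Longrightarrow> U \<noteq> {} \<Longrightarrow> \<exists>d\<in>Dd. d \<in> U"
  shows "adaptive_lasso x n lam (resp x \<beta> e) $ j = 0 \<longleftrightarrow>
    (\<forall>d'\<in>Dd. \<forall>k::nat. \<exists>d\<in>Dd. al_obj x n lam (resp x \<beta> e) (\<chi> i. if i = j then 0 else d $ i)
        < al_obj x n lam (resp x \<beta> e) d' + 1 / Suc k)"
proof (rule unique_minimizer_coord_zero_iff[OF _ adaptive_lasso_minimizes[OF quad] _ _ dense])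
  interpret weighted_l1_quadratic "gram x n" "design_noise x n e" \<beta> "al_weights x n lam (resp x \<beta> e)" c K
    by (rule quad)
  show "continuous_on UNIV (al_obj x n lam (resp x \<beta> e))"
    unfolding al_obj_resp[abs_def] by (intro continuous_intros obj_continuous)
  show "b' = adaptive_lasso x n lam (resp x \<beta> e)"
    if "\<forall>y. al_obj x n lam (resp x \<beta> e) b' \<le> al_obj x n lam (resp x \<beta> e) y" for b'
    using obj_minimizer_unique that adaptive_lasso_minimizes[OF quad] by (simp add: al_obj_resp)
  have "closed {v :: real^'p. v $ j = 0}" by (intro closed_Collect_eq continuous_intros)
  then obtain h where "h \<in> {v. v $ j = 0}" "\<forall>y\<in>{v. v $ j = 0}. obj h \<le> obj y"
    using obj_attains_min_on_closed[of "{v. v $ j = 0}" 0] by auto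
  then show "\<exists>h. h $ j = 0 \<and> (\<forall>y. y $ j = 0 \<longrightarrow> al_obj x n lam (resp x \<beta> e) h \<le> al_obj x n lam (resp x \<beta> e) y)"
    by (auto simp: al_obj_resp)
qed

section \<open>Measurability and the noise bound\<close>

lemma coordinate_measurable:
  assumes "sets D = sets borel" and "i < n"
  shows "(\<lambda>e. e i) \<in> borel_measurable (PiM {..<n} (\<lambda>_. D))"
proof -
  have "(\<lambda>e. e i) \<in> measurable (PiM {..<n} (\<lambda>_. D)) D"
    using assms(2) by (intro measurable_component_singleton) auto
  then show ?thesis using measurable_cong_sets[OF refl assms(1)] by blast
qed

lemma design_noise_measurable:
  assumes "sets D = sets borel"
  shows "design_noise x n \<in> borel_measurable (PiM {..<n} (\<lambda>_. D))"
  unfolding design_noise_def[abs_def]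
  using coordinate_measurable[OF assms] by (intro borel_measurable_sum borel_measurable_scaleR) auto

lemma lsq_coordinate_measurable:
  assumes "sets D = sets borel"
  shows "(\<lambda>e. lsq x n (resp x \<beta> e) $ j) \<in> borel_measurable (PiM {..<n} (\<lambda>_. D))"
proof -
  have "(\<lambda>e. lsq x n (resp x \<beta> e) $ j) =
      (\<lambda>v. (matrix_inv (gram x n) *v (gram x n *v \<beta> + v)) $ j) \<circ> design_noise x n"
    by (simp add: fun_eq_iff lsq_def resp_def gram_mult_vector design_noise_def scaleR_add_left sum.distrib)
  moreover have "(\<lambda>v. (matrix_inv (gram x n) *v (gram x n *v \<beta> + v)) $ j) \<in> borel_measurable borel"
    by (intro borel_measurable_continuous_onI continuous_intros
        bounded_linear.continuous_on[OF matrix_vector_mul_bounded_linear])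
  ultimately show ?thesis using measurable_comp[OF design_noise_measurable[OF assms]] by simp
qed

lemma al_obj_measurable:
  assumes "sets D = sets borel"
  shows "(\<lambda>e. al_obj x n lam (resp x \<beta> e) b) \<in> borel_measurable (PiM {..<n} (\<lambda>_. D))"
  unfolding al_obj_def resp_def
  using coordinate_measurable[OF assms] lsq_coordinate_measurable[OF assms, unfolded resp_def]
  by measurable

lemma adaptive_lasso_support_event_measurable:
  fixes x :: "nat \<Rightarrow> real^'p::finite"
  assumes "sets D = sets borel"
    and quad: "\<And>e. weighted_l1_quadratic (gram x n) (al_weights x n lam (resp x \<beta> e)) c K"
  shows "{e \<in> space (PiM {..<n} (\<lambda>_. D)). \<forall>j. adaptive_lasso x n lam (resp x \<beta> e) $ j \<noteq> 0 \<longleftrightarrow> \<beta> $ j \<noteq> 0}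
      \<in> sets (PiM {..<n} (\<lambda>_. D))"
proof -
  obtain Dd :: "(real^'p) set" where "countable Dd" and dense: "\<And>U. open U \<Longrightarrow> U \<noteq> {} \<Longrightarrow> \<exists>d\<in>Dd. d \<in> U"
    using countable_dense_exists by blast
  then have "Dd \<noteq> {}" by blast
  define g where "g = from_nat_into Dd"
  have "range g = Dd" unfolding g_def using \<open>countable Dd\<close> \<open>Dd \<noteq> {}\<close> by simp
  define F where "F e b = al_obj x n lam (resp x \<beta> e) b" for e b
  \<comment> \<open>membership is decided by countably many comparisons of measurable functions of the noise\<close>
  have "adaptive_lasso x n lam (resp x \<beta> e) $ j = 0 \<longleftrightarrow>
      (\<forall>m1. \<forall>k::nat. \<exists>m2. F e (\<chi> i. if i = j then 0 else g m2 $ i) < F e (g m1) + 1 / Suc k)" for e j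
    using adaptive_lasso_coord_zero_iff[OF quad dense] unfolding \<open>range g = Dd\<close>[symmetric] F_def
    by simp
  then have "{e \<in> space (PiM {..<n} (\<lambda>_. D)). \<forall>j. adaptive_lasso x n lam (resp x \<beta> e) $ j \<noteq> 0 \<longleftrightarrow> \<beta> $ j \<noteq> 0}
    = {e \<in> space (PiM {..<n} (\<lambda>_. D)). \<forall>j\<in>UNIV.
        (\<not> (\<forall>m1. \<forall>k::nat. \<exists>m2. F e (\<chi> i. if i = j then 0 else g m2 $ i) < F e (g m1) + 1 / Suc k))
        \<longleftrightarrow> \<beta> $ j \<noteq> 0}"
    by auto
  also have "\<dots> \<in> sets (PiM {..<n} (\<lambda>_. D))"
    using al_obj_measurable[OF assms(1)] unfolding F_def by measurable
  finally show ?thesis .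
qed

lemma noise_product_moment:
  fixes D :: "real measure" and n :: nat
  assumes "prob_space D" and "sets D = sets borel"
    and "integrable D (\<lambda>t. t)" and mean: "integral\<^sup>L D (\<lambda>t. t) = 0" and "integrable D (\<lambda>t. t\<^sup>2)"
    and "i < n" "j < n"
  shows "integrable (PiM {..<n} (\<lambda>_. D)) (\<lambda>e. e i * e j)"
    and "integral\<^sup>L (PiM {..<n} (\<lambda>_. D)) (\<lambda>e. e i * e j) = (if i = j then integral\<^sup>L D (\<lambda>t. t\<^sup>2) else 0)"
proof -
  interpret D: prob_space D by fact
  interpret product_sigma_finite "\<lambda>_::nat. D" ..
  define f where "f k t = (if k = i then t else 1) * (if k = j then (t::real) else 1)" for k t
  have prod_f: "(\<Prod>k<n. f k (e k)) = e i * e j" for e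
    using \<open>i < n\<close> \<open>j < n\<close> unfolding f_def prod.distrib by (simp add: prod.delta)
  have f_cases: "f k = (\<lambda>t. t\<^sup>2) \<and> k = i \<and> k = j \<or> f k = (\<lambda>t. t) \<and> (k = i) \<noteq> (k = j)
      \<or> f k = (\<lambda>t. 1) \<and> k \<noteq> i \<and> k \<noteq> j" for k
    by (auto simp: f_def fun_eq_iff power2_eq_square)
  have f_integrable: "integrable D (f k)" for k
    using f_cases[of k] assms by auto
  have f_integral: "integral\<^sup>L D (f k) =
      (if k = i \<and> k = j then integral\<^sup>L D (\<lambda>t. t\<^sup>2) else if k = i \<or> k = j then 0 else 1)" for k
    using f_cases[of k] mean D.prob_space by auto
  show "integrable (PiM {..<n} (\<lambda>_. D)) (\<lambda>e. e i * e j)"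
    using product_integrable_prod[of "{..<n}" f] f_integrable by (simp add: prod_f)
  have "integral\<^sup>L (PiM {..<n} (\<lambda>_. D)) (\<lambda>e. e i * e j) = (\<Prod>k<n. integral\<^sup>L D (f k))"
    using product_integral_prod[of "{..<n}" f] f_integrable by (simp add: prod_f)
  also have "\<dots> = (if i = j then integral\<^sup>L D (\<lambda>t. t\<^sup>2) else 0)"
  proof (cases "i = j")
    case True
    then show ?thesis using \<open>i < n\<close> by (simp add: f_integral prod.delta cong: if_cong)
  next
    case False
    then have "\<exists>k\<in>{..<n}. integral\<^sup>L D (f k) = 0" using \<open>i < n\<close> by (auto simp: f_integral)
    then show ?thesis using False by simp
  qed
  finally show "integral\<^sup>L (PiM {..<n} (\<lambda>_. D)) (\<lambda>e. e i * e j) = (if i = j then integral\<^sup>L D (\<lambda>t. t\<^sup>2) else 0)" .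
qed

lemma sum_norm_sq_le_card_mult_bound:
  fixes x :: "nat \<Rightarrow> real^'p::finite" and K :: real
  assumes bounded: "\<And>v. norm (gram x n *v v) \<le> K * norm v"
  shows "(\<Sum>i<n. (norm (x i))\<^sup>2) \<le> CARD('p) * K"
proof -
  \<comment> \<open>the left-hand side is the trace of the Gram matrix\<close>
  have "axis k 1 \<bullet> (gram x n *v axis k 1) = (\<Sum>i<n. x i $ k * x i $ k)" for k
    by (simp add: inner_gram_mult inner_axis inner_commute)
  moreover have "(\<Sum>i<n. (norm (x i))\<^sup>2) = (\<Sum>k\<in>UNIV. \<Sum>i<n. x i $ k * x i $ k)"
    by (simp add: power2_norm_eq_inner inner_vec_def sum.swap[of _ "{..<n}"])
  ultimately have "(\<Sum>i<n. (norm (x i))\<^sup>2) = (\<Sum>k\<in>UNIV. axis k 1 \<bullet> (gram x n *v axis k 1))"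
    by simp
  also have "\<dots> \<le> (\<Sum>k\<in>(UNIV::'p set). K)"
  proof (rule sum_mono)
    fix k :: 'p
    show "axis k 1 \<bullet> (gram x n *v axis k 1) \<le> K"
      using Cauchy_Schwarz_ineq2[of "axis k 1" "gram x n *v axis k 1"] bounded[of "axis k 1"]
      by (simp add: norm_axis_1)
  qed
  finally show ?thesis by simp
qed

lemma design_noise_second_moment:
  fixes D :: "real measure" and x :: "nat \<Rightarrow> real^'p::finite" and n :: nat
  assumes noise: "prob_space D" "sets D = sets borel" "integrable D (\<lambda>t. t)"
      "integral\<^sup>L D (\<lambda>t. t) = 0" "integrable D (\<lambda>t. t\<^sup>2)"
  defines "P \<equiv> PiM {..<n} (\<lambda>_. D)"
  shows "integrable P (\<lambda>e. (norm (design_noise x n e))\<^sup>2)"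
    and "integral\<^sup>L P (\<lambda>e. (norm (design_noise x n e))\<^sup>2) = integral\<^sup>L D (\<lambda>t. t\<^sup>2) * (\<Sum>i<n. (norm (x i))\<^sup>2)"
proof -
  have expand: "(norm (design_noise x n e))\<^sup>2 = (\<Sum>i<n. \<Sum>j<n. (x i \<bullet> x j) * (e i * e j))" for e
    by (simp add: design_noise_def power2_norm_eq_inner inner_sum_left inner_sum_right sum_distrib_left
        mult_ac inner_commute[of "x _" "x _"])
  have integrable: "integrable P (\<lambda>e. e i * e j)" if "i < n" "j < n" for i j
    using noise_product_moment(1)[OF noise that] unfolding P_def .
  show "integrable P (\<lambda>e. (norm (design_noise x n e))\<^sup>2)"
    unfolding expand by (auto intro!: Bochner_Integration.integrable_sum integrable_mult_right integrable)
  have "integral\<^sup>L P (\<lambda>e. (norm (design_noise x n e))\<^sup>2)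
      = (\<Sum>i<n. integral\<^sup>L P (\<lambda>e. \<Sum>j<n. (x i \<bullet> x j) * (e i * e j)))"
    unfolding expand
    by (rule Bochner_Integration.integral_sum)
      (auto intro!: Bochner_Integration.integrable_sum integrable_mult_right integrable)
  also have "\<dots> = (\<Sum>i<n. \<Sum>j<n. (x i \<bullet> x j) * integral\<^sup>L P (\<lambda>e. e i * e j))"
    by (intro sum.cong refl trans[OF Bochner_Integration.integral_sum] integral_mult_right_zero)
      (auto intro!: integrable_mult_right integrable)
  also have "\<dots> = (\<Sum>i<n. \<Sum>j<n. (x i \<bullet> x j) * (if i = j then integral\<^sup>L D (\<lambda>t. t\<^sup>2) else 0))"
    using noise_product_moment(2)[OF noise] unfolding P_def by simp
  also have "\<dots> = integral\<^sup>L D (\<lambda>t. t\<^sup>2) * (\<Sum>i<n. (norm (x i))\<^sup>2)"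
    by (simp add: sum_distrib_left power2_norm_eq_inner mult.commute if_distrib sum.delta cong: if_cong)
  finally show "integral\<^sup>L P (\<lambda>e. (norm (design_noise x n e))\<^sup>2)
      = integral\<^sup>L D (\<lambda>t. t\<^sup>2) * (\<Sum>i<n. (norm (x i))\<^sup>2)" .
qed

lemma design_noise_tail_bound:
  fixes D :: "real measure" and x :: "nat \<Rightarrow> real^'p::finite" and K :: real
  assumes noise: "prob_space D" "sets D = sets borel" "integrable D (\<lambda>t. t)"
      "integral\<^sup>L D (\<lambda>t. t) = 0" "integrable D (\<lambda>t. t\<^sup>2)"
    and bounded: "\<And>v. norm (gram x n *v v) \<le> K * norm v"
    and "a > 0"
  shows "measure (PiM {..<n} (\<lambda>_. D)) {e \<in> space (PiM {..<n} (\<lambda>_. D)). a \<le> (norm (design_noise x n e))\<^sup>2}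
     \<le> integral\<^sup>L D (\<lambda>t. t\<^sup>2) * CARD('p) * K / a"
proof -
  have "measure (PiM {..<n} (\<lambda>_. D)) {e \<in> space (PiM {..<n} (\<lambda>_. D)). a \<le> (norm (design_noise x n e))\<^sup>2}
      \<le> integral\<^sup>L D (\<lambda>t. t\<^sup>2) * (\<Sum>i<n. (norm (x i))\<^sup>2) / a"
    using integral_Markov_inequality_measure[OF design_noise_second_moment(1)[OF noise] sets.empty_sets _ \<open>a > 0\<close>]
    by (simp add: design_noise_second_moment(2)[OF noise])
  also have "\<dots> \<le> integral\<^sup>L D (\<lambda>t. t\<^sup>2) * (CARD('p) * K) / a"
    using sum_norm_sq_le_card_mult_bound[OF bounded] \<open>a > 0\<close>
    by (intro divide_right_mono mult_left_mono) auto
  finally show ?thesis by (simp add: mult.assoc)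
qed

lemma measure_tendsto_one_if_small_exceptions:
  assumes prob: "\<And>n. prob_space (P n)"
    and small: "\<And>r. r > 0 \<Longrightarrow> \<forall>\<^sub>F n in sequentially. E n \<in> sets (P n)
        \<and> (\<exists>A\<in>sets (P n). measure (P n) A \<le> r \<and> (AE \<omega> in P n. \<omega> \<notin> A \<longrightarrow> \<omega> \<in> E n))"
  shows "(\<lambda>n. measure (P n) (E n)) \<longlonglongrightarrow> 1"
proof (rule LIMSEQ_I)
  fix r :: real assume "r > 0"
  have "\<forall>\<^sub>F n in sequentially. E n \<in> sets (P n)
      \<and> (\<exists>A\<in>sets (P n). measure (P n) A \<le> r / 2 \<and> (AE \<omega> in P n. \<omega> \<notin> A \<longrightarrow> \<omega> \<in> E n))"
    using small[of "r / 2"] \<open>r > 0\<close> by simp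
  then have "\<forall>\<^sub>F n in sequentially. norm (measure (P n) (E n) - 1) < r"
  proof (rule eventually_mono)
    fix n assume "E n \<in> sets (P n) \<and> (\<exists>A\<in>sets (P n). measure (P n) A \<le> r / 2 \<and> (AE \<omega> in P n. \<omega> \<notin> A \<longrightarrow> \<omega> \<in> E n))"
    then obtain A where E: "E n \<in> sets (P n)" and A: "A \<in> sets (P n)" "measure (P n) A \<le> r / 2"
      and AE: "AE \<omega> in P n. \<omega> \<notin> A \<longrightarrow> \<omega> \<in> E n" by blast
    interpret prob_space "P n" by (rule prob)
    have "emeasure (P n) (space (P n) - E n) \<le> emeasure (P n) A"
      using AE A by (intro emeasure_mono_AE) auto
    then have "1 - measure (P n) (E n) \<le> measure (P n) A"
      using prob_compl[OF E] by (simp add: emeasure_eq_measure)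
    then show "norm (measure (P n) (E n) - 1) < r"
      using A \<open>r > 0\<close> prob_le_1[of "E n"] by simp
  qed
  then show "\<exists>N. \<forall>n\<ge>N. norm (measure (P n) (E n) - 1) < r" by (simp add: eventually_sequentially)
qed

section \<open>Asymptotics\<close>

lemma lam_le_lam_star: "lam j \<le> lam_star (lam :: 'p::finite \<Rightarrow> real)"
  unfolding lam_star_def by (rule Max_ge) auto

(* the inactive-weight condition of adaptive_lasso_support at sample size n = s^2 *)
lemma inactive_weight_dominates:
  fixes s l L c K M m p :: real
  assumes "s > 0" "c > 0" "K \<ge> 0" "M > 0" "m > 0" "p \<ge> 0" "0 \<le> l" "l \<le> L"
    and large: "l > 2 * M * (M + 3 * K * M / c) / c"
    and ratio: "s * l / L > 12 * K * p * M / (m * c\<^sup>2)"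
  shows "M * s + 3/2 * (K * s\<^sup>2) * (2 * (M * s + p * (2 * L / m)) / (c * s\<^sup>2)) < l * (c * s\<^sup>2) / (M * s)"
proof -
  have "12 * K * p * M / (m * c\<^sup>2) \<ge> 0" using assms by simp
  then have "L > 0" using ratio \<open>0 \<le> l\<close> \<open>l \<le> L\<close> by (cases "L = 0") auto
  then have "s * l > 12 * K * p * M / (m * c\<^sup>2) * L" using ratio by (simp add: pos_less_divide_eq)
  then have "l * c * s / (2 * M) > 6 * K * p * L / (m * c)"
    using \<open>c > 0\<close> \<open>M > 0\<close> \<open>m > 0\<close> by (simp add: field_simps power2_eq_square)
  moreover have "l * c / (2 * M) > M + 3 * K * M / c"
    using large \<open>c > 0\<close> \<open>M > 0\<close> by (simp add: field_simps)
  from mult_strict_right_mono[OF this \<open>s > 0\<close>]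
  have "l * c * s / (2 * M) > s * (M + 3 * K * M / c)" by (simp add: field_simps)
  moreover have "M * s + 3/2 * (K * s\<^sup>2) * (2 * (M * s + p * (2 * L / m)) / (c * s\<^sup>2))
      = s * (M + 3 * K * M / c) + 6 * K * p * L / (m * c)"
    using \<open>s > 0\<close> \<open>c > 0\<close> \<open>m > 0\<close> by (simp add: field_simps power2_eq_square)
  moreover have "l * (c * s\<^sup>2) / (M * s) = l * c * s / (2 * M) + l * c * s / (2 * M)"
    using \<open>s > 0\<close> \<open>M > 0\<close> by (simp add: field_simps power2_eq_square)
  ultimately show ?thesis by argo
qed

lemma eventually_support_conditions:
  fixes lam :: "nat \<Rightarrow> 'p::finite \<Rightarrow> real" and c K M m :: real
  assumes lam_nonneg: "\<forall>n j. lam n j \<ge> 0"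
    and lamstar_lim: "(\<lambda>n. lam_star (lam n) / real n) \<longlonglongrightarrow> 0"
    and lam_inf: "\<forall>j. filterlim (\<lambda>n. lam n j) at_top sequentially"
    and lam_ratio: "\<forall>j. filterlim (\<lambda>n. sqrt (real n) * lam n j / lam_star (lam n)) at_top sequentially"
    and "c > 0" "K \<ge> 0" "M > 0" "m > 0"
  defines "rate n \<equiv> 2 * (M * sqrt n + CARD('p) * (2 * lam_star (lam n) / m)) / (c * n)"
  shows "\<forall>\<^sub>F n in sequentially. 2 * (M * sqrt n) / (c * n) \<le> m \<and> rate n < m \<and>
     (\<forall>j. M * sqrt n + 3/2 * (K * n) * rate n < lam n j * (c * n) / (M * sqrt n))"
proof -
  define p where "p = real CARD('p)"
  have error_lim: "(\<lambda>n. 2 * (M * sqrt n) / (c * n)) \<longlonglongrightarrow> 0"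
    using \<open>c > 0\<close> by real_asymp
  have "rate = (\<lambda>n. 2 * (M * sqrt n) / (c * n) + 4 * p / (m * c) * (lam_star (lam n) / n))"
  proof
    fix n
    show "rate n = 2 * (M * sqrt n) / (c * n) + 4 * p / (m * c) * (lam_star (lam n) / n)"
      using \<open>c > 0\<close> \<open>m > 0\<close> by (cases "n = 0") (simp_all add: rate_def p_def field_simps)
  qed
  moreover have "(\<lambda>n. 2 * (M * sqrt n) / (c * n) + 4 * p / (m * c) * (lam_star (lam n) / n)) \<longlonglongrightarrow> 0"
    by (intro tendsto_add_zero error_lim tendsto_mult_right_zero lamstar_lim)
  ultimately have rate_lim: "rate \<longlonglongrightarrow> 0" by (simp only:)
  have heavy: "\<forall>\<^sub>F n in sequentially. M * sqrt n + 3/2 * (K * n) * rate n < lam n j * (c * n) / (M * sqrt n)"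
    for j
  proof -
    have "\<forall>\<^sub>F n in sequentially. lam n j > 2 * M * (M + 3 * K * M / c) / c"
      using lam_inf unfolding filterlim_at_top_dense by blast
    moreover have "\<forall>\<^sub>F n in sequentially. sqrt n * lam n j / lam_star (lam n) > 12 * K * p * M / (m * c\<^sup>2)"
      using lam_ratio unfolding filterlim_at_top_dense by blast
    ultimately show ?thesis using eventually_gt_at_top[of 0]
    proof eventually_elim
      case (elim n)
      then show ?case
        using inactive_weight_dominates[of "sqrt n" c K M m p "lam n j" "lam_star (lam n)"] assms(5-8)
          lam_nonneg lam_le_lam_star[of "lam n" j]
        by (simp add: rate_def p_def)
    qed
  qed
  have "\<forall>\<^sub>F n in sequentially. \<forall>j. M * sqrt n + 3/2 * (K * n) * rate n < lam n j * (c * n) / (M * sqrt n)"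
    by (rule eventually_all_finite) (rule heavy)
  then show ?thesis
    using order_tendstoD(2)[OF error_lim \<open>m > 0\<close>] order_tendstoD(2)[OF rate_lim \<open>m > 0\<close>]
    by eventually_elim auto
qed

lemma eventually_gram_coercive_bounded:
  fixes X :: "nat \<Rightarrow> nat \<Rightarrow> real^'p::finite"
  assumes lim: "(\<lambda>n. (1 / real n) *\<^sub>R gram (X n) n) \<longlonglongrightarrow> C" and "pos_def C"
  obtains c K :: real where "c > 0" "K \<ge> 0"
    "\<forall>\<^sub>F n in sequentially. (\<forall>v. c * n * (norm v)\<^sup>2 \<le> v \<bullet> (gram (X n) n *v v))
       \<and> (\<forall>v. norm (gram (X n) n *v v) \<le> K * n * norm v)"
proof -
  obtain c where "c > 0" and coercive: "\<And>v. c * (norm v)\<^sup>2 \<le> v \<bullet> (C *v v)"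
    using pos_def_coercive[OF \<open>pos_def C\<close>] by blast
  obtain K where "K \<ge> 0" and bounds: "\<forall>\<^sub>F n in sequentially. \<forall>v.
      c / 2 * (norm v)\<^sup>2 \<le> v \<bullet> ((1 / real n) *\<^sub>R gram (X n) n *v v)
      \<and> norm ((1 / real n) *\<^sub>R gram (X n) n *v v) \<le> K * norm v"
    using eventually_coercive_bounded[OF lim \<open>c > 0\<close> coercive] by blast
  have "\<forall>\<^sub>F n in sequentially. (\<forall>v. c / 2 * n * (norm v)\<^sup>2 \<le> v \<bullet> (gram (X n) n *v v))
       \<and> (\<forall>v. norm (gram (X n) n *v v) \<le> K * n * norm v)"
    using bounds eventually_gt_at_top[of 0]
  proof eventually_elim
    case (elim n)
    then have "gram (X n) n *v v = real n *\<^sub>R ((1 / real n) *\<^sub>R gram (X n) n *v v)" for v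
      by (simp add: scaleR_matrix_vector_assoc[symmetric])
    then show ?case using elim by (auto simp: mult_left_mono mult_ac simp del: scaleR_matrix_vector_assoc)
  qed
  then show ?thesis using that[of "c / 2" K] \<open>c > 0\<close> \<open>K \<ge> 0\<close> by simp
qed

lemma exists_pos_div_square_le:
  fixes B r :: real
  assumes "r > 0"
  obtains M where "M > 0" "B / M\<^sup>2 \<le> r"
proof
  define M where "M = \<bar>B\<bar> / r + 1"
  have "M \<ge> 1" using \<open>r > 0\<close> by (simp add: M_def)
  have "B / M\<^sup>2 \<le> \<bar>B\<bar> / M\<^sup>2" by (intro divide_right_mono) auto
  also have "\<dots> \<le> \<bar>B\<bar> / M"
    using \<open>M \<ge> 1\<close> by (intro divide_left_mono) (auto simp: power2_eq_square)
  also have "\<dots> \<le> r" using \<open>r > 0\<close> \<open>M \<ge> 1\<close> by (simp add: M_def field_simps)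
  finally show "B / M\<^sup>2 \<le> r" .
  show "M > 0" using \<open>M \<ge> 1\<close> by simp
qed

lemma adaptive_lasso_support_off_small_set:
  fixes D :: "real measure" and x :: "nat \<Rightarrow> real^'p::finite" and lam :: "'p \<Rightarrow> real" and c K M :: real
  assumes noise: "prob_space D" "sets D = sets borel" "integrable D (\<lambda>t. t)"
      "integral\<^sup>L D (\<lambda>t. t) = 0" "integrable D (\<lambda>t. t\<^sup>2)"
    and "n > 0" "c > 0"
    and coercive: "\<And>v. c * n * (norm v)\<^sup>2 \<le> v \<bullet> (gram x n *v v)"
    and bounded: "\<And>v. norm (gram x n *v v) \<le> K * n * norm v"
    and lam_nonneg: "\<And>j. 0 \<le> lam j"
    and lsq_nonzero: "AE e in PiM {..<n} (\<lambda>_. D). \<forall>j. lsq x n (resp x \<beta> e) $ j \<noteq> 0"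
    and "M > 0" "m > 0" and beta_min: "\<And>j. \<beta> $ j \<noteq> 0 \<Longrightarrow> m \<le> \<bar>\<beta> $ j\<bar>"
    and conditions: "2 * (M * sqrt n) / (c * n) \<le> m"
      "2 * (M * sqrt n + CARD('p) * (2 * lam_star lam / m)) / (c * n) < m"
      "\<And>j. M * sqrt n + 3/2 * (K * n) * (2 * (M * sqrt n + CARD('p) * (2 * lam_star lam / m)) / (c * n))
          < lam j * (c * n) / (M * sqrt n)"
  defines "P \<equiv> PiM {..<n} (\<lambda>_. D)"
    and "E \<equiv> {e \<in> space (PiM {..<n} (\<lambda>_. D)). \<forall>j. adaptive_lasso x n lam (resp x \<beta> e) $ j \<noteq> 0 \<longleftrightarrow> \<beta> $ j \<noteq> 0}"
  shows "E \<in> sets P \<and> (\<exists>A\<in>sets P. measure P A \<le> integral\<^sup>L D (\<lambda>t. t\<^sup>2) * CARD('p) * K / M\<^sup>2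
      \<and> (AE e in P. e \<notin> A \<longrightarrow> e \<in> E))"
proof (intro conjI bexI)
  have "c * n > 0" "M * sqrt n > 0" using \<open>n > 0\<close> \<open>c > 0\<close> \<open>M > 0\<close> by simp_all
  have quad: "weighted_l1_quadratic (gram x n) (al_weights x n lam (resp x \<beta> e)) (c * n) (K * n)" for e
    using \<open>c * n > 0\<close> coercive bounded lam_nonneg by unfold_locales (auto intro: al_weights_nonneg)
  show "E \<in> sets P"
    unfolding E_def P_def by (rule adaptive_lasso_support_event_measurable[OF noise(2) quad])
  \<comment> \<open>by Chebyshev, the noise exceeds its typical size sqrt n by a factor M with probability O(1/M^2)\<close>
  define A where "A = {e \<in> space P. (M * sqrt n)\<^sup>2 \<le> (norm (design_noise x n e))\<^sup>2}"
  show "A \<in> sets P" unfolding A_def P_def using design_noise_measurable[OF noise(2)] by measurable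
  have "measure P A \<le> integral\<^sup>L D (\<lambda>t. t\<^sup>2) * CARD('p) * (K * n) / (M * sqrt n)\<^sup>2"
    unfolding A_def P_def using \<open>n > 0\<close> \<open>M > 0\<close> by (intro design_noise_tail_bound[OF noise bounded]) simp
  also have "\<dots> = integral\<^sup>L D (\<lambda>t. t\<^sup>2) * CARD('p) * K / M\<^sup>2"
    using \<open>n > 0\<close> by (simp add: power_mult_distrib)
  finally show "measure P A \<le> integral\<^sup>L D (\<lambda>t. t\<^sup>2) * CARD('p) * K / M\<^sup>2" .
  show "AE e in P. e \<notin> A \<longrightarrow> e \<in> E"
    using lsq_nonzero AE_space unfolding P_def[symmetric]
  proof eventually_elim
    case (elim e)
    show "e \<notin> A \<longrightarrow> e \<in> E"
    proof
      assume "e \<notin> A"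
      then have "norm (design_noise x n e) \<le> M * sqrt n"
        using elim \<open>M * sqrt n > 0\<close> by (auto simp: A_def intro: power2_le_imp_le)
      moreover have "\<And>j. lsq x n (resp x \<beta> e) $ j \<noteq> 0" using elim by blast
      ultimately have "adaptive_lasso x n lam (resp x \<beta> e) $ j \<noteq> 0 \<longleftrightarrow> \<beta> $ j \<noteq> 0" for j
        by (rule adaptive_lasso_support[OF \<open>c * n > 0\<close> coercive bounded lam_nonneg lam_le_lam_star _ _
              \<open>m > 0\<close> beta_min conditions])
      then show "e \<in> E" using elim unfolding E_def P_def by simp
    qed
  qed
qed

theorem theorem2:
  fixes X :: "nat \<Rightarrow> nat \<Rightarrow> real^'p::finite"
    and lam :: "nat \<Rightarrow> 'p \<Rightarrow> real"
    and C :: "real^'p^'p"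
    and D :: "real measure"
    and \<beta> :: "real^'p"
  assumes rank: "\<forall>n \<ge> CARD('p). full_col_rank (X n) n"
    and gram_lim: "(\<lambda>n. (1 / real n) *\<^sub>R gram (X n) n) \<longlonglongrightarrow> C"
    and C_pd: "pos_def C"
    and lam_nonneg: "\<forall>n j. lam n j \<ge> 0"
    and D_prob: "prob_space D"
    and D_sets: "sets D = sets borel"
    and D_int: "integrable D (\<lambda>x. x)"
    and D_mean: "integral\<^sup>L D (\<lambda>x. x) = 0"
    and D_int2: "integrable D (\<lambda>x. x\<^sup>2)"
    and D_var: "integral\<^sup>L D (\<lambda>x. x\<^sup>2) > 0"
    and LS_nonzero: "\<forall>n \<ge> CARD('p). AE e in PiM {..<n} (\<lambda>_. D).
                        \<forall>j. lsq (X n) n (resp (X n) \<beta> e) $ j \<noteq> 0"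
    and lamstar_lim: "(\<lambda>n. lam_star (lam n) / real n) \<longlonglongrightarrow> 0"
    and lam_inf: "\<forall>j. filterlim (\<lambda>n. lam n j) at_top sequentially"
    and lam_ratio: "\<forall>j. filterlim (\<lambda>n. sqrt (real n) * lam n j / lam_star (lam n)) at_top sequentially"
  shows "(\<lambda>n. measure (PiM {..<n} (\<lambda>_. D))
            {e \<in> space (PiM {..<n} (\<lambda>_. D)).
               \<forall>j. (adaptive_lasso (X n) n (lam n) (resp (X n) \<beta> e) $ j \<noteq> 0) \<longleftrightarrow> \<beta> $ j \<noteq> 0})
         \<longlonglongrightarrow> 1"
proof -
  obtain c K :: real where "c > 0" "K \<ge> 0" and gram_bounds: "\<forall>\<^sub>F n in sequentially.
      (\<forall>v. c * n * (norm v)\<^sup>2 \<le> v \<bullet> (gram (X n) n *v v)) \<and> (\<forall>v. norm (gram (X n) n *v v) \<le> K * n * norm v)"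
    using eventually_gram_coercive_bounded[OF gram_lim C_pd] by blast
  define m where "m = Min (insert 1 ((\<lambda>j. \<bar>\<beta> $ j\<bar>) ` {j. \<beta> $ j \<noteq> 0}))"
  have "m > 0" and beta_min: "\<And>j. \<beta> $ j \<noteq> 0 \<Longrightarrow> m \<le> \<bar>\<beta> $ j\<bar>"
    unfolding m_def by (auto intro: Min_le)
  show ?thesis
  proof (rule measure_tendsto_one_if_small_exceptions, goal_cases)
    case (1 n)
    show ?case by (intro prob_space_PiM D_prob)
  next
    case (2 r)
    obtain M where "M > 0" and "integral\<^sup>L D (\<lambda>t. t\<^sup>2) * CARD('p) * K / M\<^sup>2 \<le> r"
      using exists_pos_div_square_le[OF \<open>r > 0\<close>] by blast
    from gram_bounds eventually_ge_at_top[of "CARD('p)"]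
      eventually_support_conditions[OF lam_nonneg lamstar_lim lam_inf lam_ratio \<open>c > 0\<close> \<open>K \<ge> 0\<close> \<open>M > 0\<close> \<open>m > 0\<close>]
    show ?case
    proof eventually_elim
      case (elim n)
      have "n > 0" using elim(2) zero_less_card_finite[where 'a='p] by linarith
      from adaptive_lasso_support_off_small_set[OF D_prob D_sets D_int D_mean D_int2 \<open>n > 0\<close> \<open>c > 0\<close> _ _ _
          LS_nonzero[rule_format, OF elim(2)] \<open>M > 0\<close> \<open>m > 0\<close> beta_min]
      show ?case using elim(1,3) lam_nonneg \<open>_ \<le> r\<close> by (meson order_trans)
    qed
  qed
qed

end
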